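(* Let $p$ be analytic in $\mathbb{D}$ with $p(0)=1$ and let $Q\in\mathcal{P}$. Suppose that $\alpha\geq 0$, $\beta>0$ and that $p$ satisfies $$p(z)Q(z)+\frac{zp'(z)}{\beta p(z)+\alpha}=1\qquad(z\in\mathbb{D}).$$ Then $\operatorname{Re}p(z)>0$ for all $z\in\mathbb{D}$.
   Context: $\mathbb{D}$ is the open unit disk. $\mathcal{P}$ (the Carathéodory class) is the class of analytic functions $q(z)=1+c_1z+c_2z^2+\cdots$ in $\mathbb{D}$ with $\operatorname{Re}q(z)>0$ for all $z\in\mathbb{D}$. *)

theory Defs
  imports "HOL-Complex_Analysis.Complex_Analysis"
begin

definition caratheodory_class :: "(complex \<Rightarrow> complex) set" where
  "caratheodory_class = {q. q analytic_on ball 0 1 \<and> q 0 = 1 \<and>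
                            (\<forall>z\<in>ball 0 1. Re (q z) > 0)}"

end

theory Submission
  imports Defs
begin

text \<open>
  If Re p were not positive on the disk, compactness gives a point z0 of least modulus with
  Re p(z0) \<le> 0, so Re p > 0 on the smaller disk |z| < |z0|.  Moving from z0 into that disk in
  any direction z0 w with Re w < 0 can only increase Re p to first order, which forces
  Re p(z0) = 0 and makes z0 p'(z0) real and non-positive (a form of Jack's lemma).  Substituting
  p(z0) = i \<rho> and z0 p'(z0) = r \<le> 0 into the differential equation and separating real and
  imaginary parts, using Re Q(z0) > 0, \<alpha> \<ge> 0 and \<beta> > 0, yields a contradiction.
\<close>

lemma obtain_least_norm_nonpositive_point:
  fixes g :: "'a::{real_normed_vector, heine_borel} \<Rightarrow> real"
  assumes cont: "continuous_on (cball 0 (norm x)) g" and "g x \<le> 0"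
  obtains z where "norm z \<le> norm x" and "g z \<le> 0" and "\<And>y. norm y < norm z \<Longrightarrow> g y > 0"
proof -
  define S where "S = cball 0 (norm x) \<inter> g -` {..0}"
  have "closed S"
    unfolding S_def by (intro continuous_closed_preimage cont) auto
  then have "compact S"
    unfolding S_def by (simp add: compact_eq_bounded_closed bounded_Int)
  moreover have "x \<in> S" using \<open>g x \<le> 0\<close> unfolding S_def by simp
  ultimately obtain z where "z \<in> S" and least: "\<And>y. y \<in> S \<Longrightarrow> norm z \<le> norm y"
    using continuous_attains_inf[of S norm] continuous_on_norm_id by blast
  show thesis
  proof
    show "norm z \<le> norm x" and "g z \<le> 0" using \<open>z \<in> S\<close> unfolding S_def by auto
    show "g y > 0" if "norm y < norm z" for y
      using that least[of y] \<open>norm z \<le> norm x\<close> unfolding S_def by fastforce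
  qed
qed

lemma DERIV_nonneg_if_positive_at_right:
  fixes f :: "real \<Rightarrow> real"
  assumes deriv: "(f has_real_derivative D) (at x)"
    and pos: "eventually (\<lambda>h. f h > 0) (at_right x)"
    and nonpos: "f x \<le> 0"
  shows "f x = 0" and "D \<ge> 0"
proof -
  have "(f \<longlongrightarrow> f x) (at_right x)"
    using DERIV_isCont[OF deriv] by (simp add: isCont_def filterlim_at_split)
  then have "f x \<ge> 0"
    by (rule tendsto_lowerbound) (use pos in \<open>auto elim: eventually_mono\<close>)
  then show "f x = 0" using nonpos by simp
  have "((\<lambda>h. (f (x + h) - f x) / h) \<longlongrightarrow> D) (at_right 0)"
    using deriv unfolding DERIV_def by (simp add: filterlim_at_split)
  moreover have "eventually (\<lambda>h. (f (x + h) - f x) / h \<ge> 0) (at_right 0)"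
  proof -
    have "eventually (\<lambda>h. f (x + h) > 0) (at_right 0)"
      using pos by (simp add: at_right_to_0[of x] eventually_filtermap add.commute)
    with eventually_at_right_less[of "0::real"] show ?thesis
      by eventually_elim (use nonpos in auto)
  qed
  ultimately show "D \<ge> 0"
    by (rule tendsto_lowerbound) simp
qed

lemma eventually_norm_one_plus_inward_less_one:
  fixes w :: complex
  assumes "Re w < 0"
  shows "eventually (\<lambda>h::real. norm (1 + of_real h * w) < 1) (at_right 0)"
  unfolding eventually_at_right_field
proof (intro exI conjI allI impI)
  define m where "m = (Re w)\<^sup>2 + (Im w)\<^sup>2"
  have "m > 0" using assms unfolding m_def by (simp add: add_pos_nonneg)
  then show "0 < - 2 * Re w / m" using assms by (simp add: divide_neg_pos)
  fix h :: real assume h: "0 < h" "h < - 2 * Re w / m"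
  have "h * (2 * Re w + h * m) < 0"
    using h \<open>m > 0\<close> by (intro mult_pos_neg) (auto simp: field_simps)
  moreover have "(norm (1 + of_real h * w))\<^sup>2 = 1 + h * (2 * Re w + h * m)"
    unfolding cmod_power2 m_def by (simp add: power2_eq_square algebra_simps)
  ultimately have "(norm (1 + of_real h * w))\<^sup>2 < 1\<^sup>2" by simp
  then show "norm (1 + of_real h * w) < 1"
    by (rule power_less_imp_less_base) simp
qed

lemma nonpos_real_if_Re_mult_nonneg_on_left_half_plane:
  fixes c :: complex
  assumes "\<And>w. Re w < 0 \<Longrightarrow> Re (c * w) \<ge> 0"
  shows "Im c = 0" and "Re c \<le> 0"
proof -
  show "Re c \<le> 0" using assms[of "-1"] by simp
  show "Im c = 0"
  proof (rule ccontr)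
    assume "Im c \<noteq> 0"
    then have "Re (c * Complex (-1) ((1 - Re c) / Im c)) = -1" by (simp add: field_simps)
    with assms[of "Complex (-1) ((1 - Re c) / Im c)"] show False by simp
  qed
qed

lemma directional_derivative_at_first_nonpositive_point:
  fixes p :: "complex \<Rightarrow> complex"
  assumes deriv: "(p has_field_derivative d) (at z0)" and "z0 \<noteq> 0"
    and pos: "\<And>z. norm z < norm z0 \<Longrightarrow> Re (p z) > 0"
    and nonpos: "Re (p z0) \<le> 0" and "Re w < 0"
  shows "Re (p z0) = 0" and "Re (z0 * d * w) \<ge> 0"
proof -
  define f where "f h = Re (p (z0 + of_real h * (z0 * w)))" for h :: real
  have "((\<lambda>h::real. z0 + of_real h * (z0 * w)) has_vector_derivative z0 * w) (at 0)"
    by (auto intro!: derivative_eq_intros simp: has_vector_derivative_def scaleR_conv_of_real)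
  from field_vector_diff_chain_at[OF this] deriv
  have "((p \<circ> (\<lambda>h::real. z0 + of_real h * (z0 * w))) has_vector_derivative z0 * w * d) (at 0)"
    by simp
  from has_field_derivative_Re[OF this]
  have f_deriv: "(f has_real_derivative Re (z0 * d * w)) (at 0)"
    unfolding f_def o_def by (simp add: mult_ac)
  have "eventually (\<lambda>h. f h > 0) (at_right 0)"
    using eventually_norm_one_plus_inward_less_one[OF \<open>Re w < 0\<close>]
  proof eventually_elim
    case (elim h)
    have "norm (z0 + of_real h * (z0 * w)) = norm z0 * norm (1 + of_real h * w)"
      by (simp add: norm_mult[symmetric] algebra_simps)
    also have "\<dots> < norm z0" using elim \<open>z0 \<noteq> 0\<close> by simp
    finally show ?case using pos unfolding f_def by simp
  qed
  from DERIV_nonneg_if_positive_at_right[OF f_deriv this] nonpos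
  show "Re (p z0) = 0" and "Re (z0 * d * w) \<ge> 0" unfolding f_def by simp_all
qed

lemma derivative_at_first_nonpositive_point:
  fixes p :: "complex \<Rightarrow> complex"
  assumes "(p has_field_derivative d) (at z0)" and "z0 \<noteq> 0"
    and "\<And>z. norm z < norm z0 \<Longrightarrow> Re (p z) > 0" and "Re (p z0) \<le> 0"
  obtains \<rho> r :: real where "p z0 = \<i> * of_real \<rho>" and "z0 * d = of_real r" and "r \<le> 0"
proof
  note directional = directional_derivative_at_first_nonpositive_point[OF assms]
  show "p z0 = \<i> * of_real (Im (p z0))"
    using directional(1)[of "-1"] by (simp add: complex_eq_iff)
  show "z0 * d = of_real (Re (z0 * d))" and "Re (z0 * d) \<le> 0"
    using nonpos_real_if_Re_mult_nonneg_on_left_half_plane[OF directional(2)]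
    by (simp_all add: complex_eq_iff)
qed

lemma imaginary_value_contradicts_equation:
  fixes \<rho> r \<alpha> \<beta> :: real and q :: complex
  assumes "Re q > 0" and "\<alpha> \<ge> 0" and "\<beta> > 0" and "r \<le> 0"
    and nonzero: "of_real \<beta> * (\<i> * of_real \<rho>) + of_real \<alpha> \<noteq> 0"
  shows "\<i> * of_real \<rho> * q + of_real r / (of_real \<beta> * (\<i> * of_real \<rho>) + of_real \<alpha>) \<noteq> 1"
proof
  assume "\<i> * of_real \<rho> * q + of_real r / (of_real \<beta> * (\<i> * of_real \<rho>) + of_real \<alpha>) = 1"
  with nonzero have eq: "of_real r = (1 - \<i> * of_real \<rho> * q) * (of_real \<beta> * (\<i> * of_real \<rho>) + of_real \<alpha>)"
    by (simp add: field_simps)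
  obtain q1 q2 where q: "q = Complex q1 q2" by (cases q)
  have re: "r = \<alpha> * (1 + \<rho> * q2) + \<beta> * \<rho>\<^sup>2 * q1"
    using arg_cong[OF eq, of Re] unfolding q by (simp add: power2_eq_square algebra_simps)
  have im: "\<rho> * (\<beta> * (1 + \<rho> * q2) - \<alpha> * q1) = 0"
    using arg_cong[OF eq, of Im] unfolding q by (simp add: algebra_simps)
  have "q1 > 0" using \<open>Re q > 0\<close> q by simp
  show False
  proof (cases "\<rho> = 0")
    case True
    then show False using re nonzero \<open>\<alpha> \<ge> 0\<close> \<open>r \<le> 0\<close> by simp
  next
    case False
    with im have balance: "\<beta> * (1 + \<rho> * q2) = \<alpha> * q1" by simp
    have "\<beta> * r = \<alpha> * (\<beta> * (1 + \<rho> * q2)) + \<beta>\<^sup>2 * \<rho>\<^sup>2 * q1"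
      using re by (simp add: power2_eq_square algebra_simps)
    also have "\<dots> = q1 * (\<alpha>\<^sup>2 + \<beta>\<^sup>2 * \<rho>\<^sup>2)"
      unfolding balance by (simp add: power2_eq_square algebra_simps)
    finally have "\<beta> * r = q1 * (\<alpha>\<^sup>2 + \<beta>\<^sup>2 * \<rho>\<^sup>2)" .
    moreover have "q1 * (\<alpha>\<^sup>2 + \<beta>\<^sup>2 * \<rho>\<^sup>2) > 0"
      using \<open>q1 > 0\<close> \<open>\<beta> > 0\<close> False by (intro mult_pos_pos add_nonneg_pos) auto
    moreover have "\<beta> * r \<le> 0" using \<open>\<beta> > 0\<close> \<open>r \<le> 0\<close> by (simp add: mult_nonneg_nonpos)
    ultimately show False by linarith
  qed
qed

theorem mainTheorem4:
  fixes p Q :: "complex \<Rightarrow> complex" and \<alpha> \<beta> :: real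
  assumes "p analytic_on ball 0 1" and "p 0 = 1"
    and "Q \<in> caratheodory_class"
    and "\<alpha> \<ge> 0" and "\<beta> > 0"
    and "\<forall>z\<in>ball 0 1. of_real \<beta> * p z + of_real \<alpha> \<noteq> 0"
    and "\<forall>z\<in>ball 0 1. p z * Q z + z * deriv p z / (of_real \<beta> * p z + of_real \<alpha>) = 1"
  shows "\<forall>z\<in>ball 0 1. Re (p z) > 0"
proof (rule ccontr)
  assume "\<not> ?thesis"
  then obtain z1 where z1: "z1 \<in> ball 0 1" "Re (p z1) \<le> 0" by auto
  have hol: "p holomorphic_on ball 0 1" using assms(1) by (rule analytic_imp_holomorphic)
  have "continuous_on (cball 0 (norm z1)) (\<lambda>z. Re (p z))"
    using z1(1) holomorphic_on_imp_continuous_on[OF hol]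
    by (intro continuous_intros) (auto elim!: continuous_on_subset)
  then obtain z0 where "norm z0 \<le> norm z1" and nonpos: "Re (p z0) \<le> 0"
    and pos: "\<And>z. norm z < norm z0 \<Longrightarrow> Re (p z) > 0"
    using obtain_least_norm_nonpositive_point z1(2) by blast
  then have z0: "z0 \<in> ball 0 1" using z1(1) by simp
  have "z0 \<noteq> 0" using nonpos \<open>p 0 = 1\<close> by auto
  have "(p has_field_derivative deriv p z0) (at z0)"
    using hol z0 by (auto intro: holomorphic_derivI)
  then obtain \<rho> r where p_z0: "p z0 = \<i> * of_real \<rho>"
    and deriv_z0: "z0 * deriv p z0 = of_real r" and "r \<le> 0"
    using derivative_at_first_nonpositive_point \<open>z0 \<noteq> 0\<close> pos nonpos by blast
  have "p z0 * Q z0 + z0 * deriv p z0 / (of_real \<beta> * p z0 + of_real \<alpha>) = 1"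
    using assms(7) z0 by blast
  then have "\<i> * of_real \<rho> * Q z0 + of_real r / (of_real \<beta> * (\<i> * of_real \<rho>) + of_real \<alpha>) = 1"
    unfolding p_z0 deriv_z0 .
  moreover have "of_real \<beta> * (\<i> * of_real \<rho>) + of_real \<alpha> \<noteq> 0"
    using assms(6) z0 p_z0 by metis
  moreover have "Re (Q z0) > 0" using assms(3) z0 by (simp add: caratheodory_class_def)
  ultimately show False
    using imaginary_value_contradicts_equation \<open>\<alpha> \<ge> 0\<close> \<open>\<beta> > 0\<close> \<open>r \<le> 0\<close> by blast
qed

end
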